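(* Let $s\in S^{\mathbb{N}}$ be a directive sequence and $u=(u_k)$ a fixed point of $s$. Let $b_n$ be the first letter of $u_n$, and assume $|s_{[0,n)}(b_n)|\to\infty$ as $n\to\infty$. Then for every $a\in A$, $$W_a(u_0)=\bigcup_{n\in\mathbb{N}}\Big\{\sum_{k=0}^nM_{[0,k)}t_k\ \Big|\ b_{n+1}\xrightarrow{t_n,s_n}\cdots\xrightarrow{t_0,s_0}a \text{ is a path in } \mathcal{A}\Big\}.$$
   Context: $A=\{0,\dots,d\}$; $S$ is a finite set of unimodular substitutions on $A$ (morphisms of $A^*$ sending letters to non-empty words, extended to infinite words). $\mathrm{ab}(w)\in\mathbb{Z}^{d+1}$ counts letters of $w$, $\mathrm{ab}(\sigma)$ is the matrix of $\sigma$. For $s=(s_k)$: $M_k=\mathrm{ab}(s_k)$, $M_{[0,k)}=M_0\cdots M_{k-1}$ ($M_{[0,0)}=\mathrm{Id}$), $s_{[0,n)}=s_0\circ\cdots\circ s_{n-1}$. A fixed point of $s$ is $(u_k)$ with $s_k(u_{k+1})=u_k$ for all $k$. $W_a(w)=\{\mathrm{ab}(p):pa\text{ prefix of }w\}$. Abelianized prefix automaton $\mathcal{A}$: states $A$, transitions $c\xrightarrow{t,\sigma}e$ ($\sigma\in S$) iff $\sigma(c)=peq$ for words $p,q$ with $\mathrm{ab}(p)=t$; a path $c_{n+1}\xrightarrow{t_n,s_n}\cdots\xrightarrow{t_0,s_0}c_0$ means $c_{k+1}\xrightarrow{t_k,s_k}c_k$ are transitions for all $0\le k\le n$. *)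

theory Defs
  imports "HOL-Analysis.Analysis"
begin

text \<open>The alphabet A is modelled by an arbitrary finite type 'a (so A = {0..d} with d+1 = CARD('a)).\<close>

type_synonym 'a subst = "'a \<Rightarrow> 'a list"

definition is_subst :: "'a subst \<Rightarrow> bool" where
  "is_subst \<sigma> \<longleftrightarrow> (\<forall>c. \<sigma> c \<noteq> [])"

definition ab :: "'a::finite list \<Rightarrow> int ^ 'a" where
  "ab w = (\<chi> i. int (count_list w i))"

definition ab_mat :: "'a::finite subst \<Rightarrow> int ^ 'a ^ 'a" where
  "ab_mat \<sigma> = (\<chi> i j. int (count_list (\<sigma> j) i))"

definition unimodular :: "'a::finite subst \<Rightarrow> bool" where
  "unimodular \<sigma> \<longleftrightarrow> det (ab_mat \<sigma>) = 1 \<or> det (ab_mat \<sigma>) = -1"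

definition subst_word :: "'a subst \<Rightarrow> 'a list \<Rightarrow> 'a list" where
  "subst_word \<sigma> w = concat (map \<sigma> w)"

definition pref :: "(nat \<Rightarrow> 'a) \<Rightarrow> nat \<Rightarrow> 'a list" where
  "pref x n = map x [0..<n]"

text \<open>Image of an infinite word (for substitutions with non-empty images).\<close>
definition subst_inf :: "'a subst \<Rightarrow> (nat \<Rightarrow> 'a) \<Rightarrow> (nat \<Rightarrow> 'a)" where
  "subst_inf \<sigma> x = (\<lambda>i. subst_word \<sigma> (pref x (Suc i)) ! i)"

text \<open>s_[0,n) = s_0 o ... o s_(n-1), acting on finite words.\<close>
fun subst_prefix :: "(nat \<Rightarrow> 'a subst) \<Rightarrow> nat \<Rightarrow> 'a list \<Rightarrow> 'a list" where
  "subst_prefix s 0 w = w"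
| "subst_prefix s (Suc n) w = subst_prefix s n (subst_word (s n) w)"

fun mat_prefix :: "(nat \<Rightarrow> 'a::finite subst) \<Rightarrow> nat \<Rightarrow> int ^ 'a ^ 'a" where
  "mat_prefix s 0 = mat 1"
| "mat_prefix s (Suc k) = mat_prefix s k ** ab_mat (s k)"

definition is_fixed_point :: "(nat \<Rightarrow> 'a subst) \<Rightarrow> (nat \<Rightarrow> nat \<Rightarrow> 'a) \<Rightarrow> bool" where
  "is_fixed_point s u \<longleftrightarrow> (\<forall>k. subst_inf (s k) (u (Suc k)) = u k)"

definition W :: "'a::finite \<Rightarrow> (nat \<Rightarrow> 'a) \<Rightarrow> (int ^ 'a) set" where
  "W a w = {ab (pref w n) | n. w n = a}"

definition trans_ap :: "'a::finite subst set \<Rightarrow> 'a \<Rightarrow> int ^ 'a \<Rightarrow> 'a subst \<Rightarrow> 'a \<Rightarrow> bool" where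
  "trans_ap S c t \<sigma> e \<longleftrightarrow> \<sigma> \<in> S \<and> (\<exists>p q. \<sigma> c = p @ e # q \<and> ab p = t)"

definition is_path :: "'a::finite subst set \<Rightarrow> nat \<Rightarrow> 'a \<Rightarrow> (nat \<Rightarrow> int ^ 'a) \<Rightarrow> (nat \<Rightarrow> 'a subst) \<Rightarrow> 'a \<Rightarrow> bool" where
  "is_path S n b t s a \<longleftrightarrow> (\<exists>c. c (Suc n) = b \<and> c 0 = a \<and>
      (\<forall>k\<le>n. trans_ap S (c (Suc k)) (t k) (s k) (c k)))"

end

theory Submission
  imports Defs
begin

text \<open>Because u_0 = s_[0,n)(u_n), every word s_[0,n)(b_n) is a prefix of u_0, and by the growth
  hypothesis these prefixes exhaust u_0. An occurrence of a in s_[0,n+1)(b_(n+1)) is traced back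
  one substitution at a time: if at level k+1 it descends from the letter c_(k+1) and
  s_k(c_(k+1)) = p c_k q, this is a transition c_(k+1) \<rightarrow> c_k labelled ab(p), and p contributes
  M_[0,k) ab(p) to the abelianized prefix in front of the occurrence. Conversely every path yields
  such an occurrence.\<close>

definition prefix_inf :: "'a list \<Rightarrow> (nat \<Rightarrow> 'a) \<Rightarrow> bool" where
  "prefix_inf w x \<longleftrightarrow> (\<forall>i<length w. x i = w ! i)"

lemma pref_eq_if_prefix_inf: "prefix_inf w x \<Longrightarrow> pref x (length w) = w"
  unfolding prefix_inf_def pref_def by (intro nth_equalityI) auto

lemma W_eq_Union_occurrences:
  assumes prefixes: "\<And>n. prefix_inf (w n) x"
    and unbounded: "filterlim (\<lambda>n. length (w n)) at_top sequentially"
  shows "W a x = (\<Union>n. {ab p | p q. w n = p @ a # q})"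
proof (intro equalityI subsetI)
  fix v assume "v \<in> W a x"
  then obtain m where v: "v = ab (pref x m)" and "x m = a"
    unfolding W_def by blast
  obtain n where n: "m < length (w n)"
    using unbounded unfolding filterlim_at_top eventually_sequentially
    by (meson le_refl Suc_le_eq)
  then have "take m (w n) = pref x m" "w n ! m = a"
    using prefixes[of n] \<open>x m = a\<close> unfolding prefix_inf_def pref_def
    by (auto intro!: nth_equalityI)
  then have "w n = pref x m @ a # drop (Suc m) (w n)"
    using id_take_nth_drop[OF n] by simp
  then show "v \<in> (\<Union>n. {ab p | p q. w n = p @ a # q})"
    using v by blast
next
  fix v assume "v \<in> (\<Union>n. {ab p | p q. w n = p @ a # q})"
  then obtain n p q where v: "v = ab p" and w: "w n = p @ a # q"
    by blast
  have "prefix_inf p x" "x (length p) = a"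
    using prefixes[of n] unfolding w prefix_inf_def by (auto simp: nth_append)
  then have "v = ab (pref x (length p))"
    using v pref_eq_if_prefix_inf[OF \<open>prefix_inf p x\<close>] by simp
  with \<open>x (length p) = a\<close> show "v \<in> W a x"
    unfolding W_def by blast
qed

lemma subst_word_Nil [simp]: "subst_word \<sigma> [] = []"
  by (simp add: subst_word_def)

lemma subst_word_Cons [simp]: "subst_word \<sigma> (c # w) = \<sigma> c @ subst_word \<sigma> w"
  by (simp add: subst_word_def)

lemma subst_word_append [simp]: "subst_word \<sigma> (v @ w) = subst_word \<sigma> v @ subst_word \<sigma> w"
  by (simp add: subst_word_def)

lemma length_subst_word_ge: "is_subst \<sigma> \<Longrightarrow> length w \<le> length (subst_word \<sigma> w)"
proof (induction w)
  case (Cons c w)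
  then have "length (\<sigma> c) \<ge> 1"
    by (simp add: is_subst_def Suc_le_eq)
  with Cons show ?case by simp
qed simp

lemma nth_subst_word_take:
  assumes "i < length (subst_word \<sigma> (take k v))"
  shows "subst_word \<sigma> (take k v) ! i = subst_word \<sigma> v ! i"
proof -
  have "subst_word \<sigma> v = subst_word \<sigma> (take k v) @ subst_word \<sigma> (drop k v)"
    by (metis append_take_drop_id subst_word_append)
  then show ?thesis
    using assms by (simp add: nth_append)
qed

lemma prefix_inf_subst_inf:
  assumes "prefix_inf w x" "is_subst \<sigma>"
  shows "prefix_inf (subst_word \<sigma> w) (subst_inf \<sigma> x)"
  unfolding prefix_inf_def
proof (intro allI impI)
  fix i assume i: "i < length (subst_word \<sigma> w)"
  define v where "v = pref x (max (Suc i) (length w))"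
  have w: "take (length w) v = w" and p: "take (Suc i) v = pref x (Suc i)"
    using pref_eq_if_prefix_inf[OF assms(1)] unfolding v_def pref_def
    by (simp_all add: take_map min_def)
  have "i < length (subst_word \<sigma> (pref x (Suc i)))"
    using length_subst_word_ge[OF assms(2), of "pref x (Suc i)"] by (simp add: pref_def)
  then have "subst_inf \<sigma> x i = subst_word \<sigma> v ! i"
    using nth_subst_word_take[of i \<sigma> "Suc i" v] unfolding subst_inf_def p by simp
  also have "\<dots> = subst_word \<sigma> w ! i"
    using nth_subst_word_take[of i \<sigma> "length w" v] i unfolding w by simp
  finally show "subst_inf \<sigma> x i = subst_word \<sigma> w ! i" .
qed

lemma prefix_inf_subst_prefix:
  assumes "is_fixed_point s u" "\<And>k. is_subst (s k)"
  shows "prefix_inf w (u n) \<Longrightarrow> prefix_inf (subst_prefix s n w) (u 0)"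
proof (induction n arbitrary: w)
  case 0
  then show ?case by simp
next
  case (Suc n)
  have "prefix_inf (subst_word (s n) w) (u n)"
    using prefix_inf_subst_inf[OF Suc.prems assms(2)[of n]] assms(1)
    unfolding is_fixed_point_def by simp
  then show ?case
    using Suc.IH by simp
qed

lemma subst_prefix_Nil [simp]: "subst_prefix s n [] = []"
  by (induction n) auto

lemma subst_prefix_append:
  "subst_prefix s n (v @ w) = subst_prefix s n v @ subst_prefix s n w"
  by (induction n arbitrary: v w) auto

lemma subst_prefix_eq_concat:
  "subst_prefix s n w = concat (map (\<lambda>c. subst_prefix s n [c]) w)"
proof (induction w)
  case (Cons c w)
  then show ?case
    using subst_prefix_append[of s n "[c]" w] by simp
qed simp

lemma ab_Nil [simp]: "ab [] = 0"
  by (simp add: ab_def vec_eq_iff)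

lemma ab_append: "ab (v @ w) = ab v + ab w"
  by (simp add: ab_def vec_eq_iff)

lemma ab_subst_word: "ab (subst_word \<sigma> w) = ab_mat \<sigma> *v ab w"
proof (induction w)
  case Nil
  then show ?case by simp
next
  case (Cons c w)
  have "ab_mat \<sigma> *v ab [c] = ab (\<sigma> c)"
    by (simp add: vec_eq_iff ab_def ab_mat_def matrix_vector_mult_def if_distrib cong: if_cong)
  then show ?case
    using Cons ab_append[of "[c]" w] by (simp add: ab_append matrix_vector_right_distrib)
qed

lemma ab_subst_prefix: "ab (subst_prefix s n w) = mat_prefix s n *v ab w"
  by (induction n arbitrary: w) (auto simp: ab_subst_word matrix_vector_mul_assoc)

lemma concat_map_eq_append_Cons:
  "concat (map f w) = p @ a # q \<Longrightarrow>
   \<exists>w\<^sub>1 c w\<^sub>2 p' q'. w = w\<^sub>1 @ c # w\<^sub>2 \<and> f c = p' @ a # q' \<and> p = concat (map f w\<^sub>1) @ p'"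
proof (induction w arbitrary: p)
  case Nil
  then show ?case by simp
next
  case (Cons c w)
  then obtain r where "f c = p @ r \<and> r @ concat (map f w) = a # q \<or>
      f c @ r = p \<and> concat (map f w) = r @ a # q"
    by (auto simp: append_eq_append_conv2)
  then consider (inside) q' where "f c = p @ a # q'"
    | (after) r where "p = f c @ r" "concat (map f w) = r @ a # q"
    by (cases r) auto
  then show ?case
  proof cases
    case inside
    then have "c # w = [] @ c # w \<and> f c = p @ a # q' \<and> p = concat (map f []) @ p"
      by simp
    then show ?thesis by blast
  next
    case after
    with Cons.IH obtain w\<^sub>1 c' w\<^sub>2 p' q' where
      "w = w\<^sub>1 @ c' # w\<^sub>2" "f c' = p' @ a # q'" "r = concat (map f w\<^sub>1) @ p'"
      by blast
    with after have "c # w = (c # w\<^sub>1) @ c' # w\<^sub>2 \<and> f c' = p' @ a # q' \<and>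
        p = concat (map f (c # w\<^sub>1)) @ p'"
      by simp
    then show ?thesis by blast
  qed
qed

text \<open>A path \<open>b = c\<^sub>n \<rightarrow> \<dots> \<rightarrow> c\<^sub>0 = a\<close> with \<open>n\<close> transitions,
  whereas \<open>is_path S n\<close> has \<open>n+1\<close>.\<close>

definition ap_walk ::
    "'a::finite subst set \<Rightarrow> (nat \<Rightarrow> 'a subst) \<Rightarrow> nat \<Rightarrow> 'a \<Rightarrow> (nat \<Rightarrow> int ^ 'a) \<Rightarrow> 'a \<Rightarrow> bool" where
  "ap_walk S s n b t a \<longleftrightarrow>
    (\<exists>c. c n = b \<and> c 0 = a \<and> (\<forall>k<n. trans_ap S (c (Suc k)) (t k) (s k) (c k)))"

lemma is_path_iff_ap_walk: "is_path S n b t s a \<longleftrightarrow> ap_walk S s (Suc n) b t a"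
  unfolding is_path_def ap_walk_def by (simp add: less_Suc_eq_le)

lemma ap_walk_0: "ap_walk S s 0 b t a \<longleftrightarrow> b = a"
  unfolding ap_walk_def by auto

lemma ap_walk_Suc:
  "ap_walk S s (Suc n) b t a \<longleftrightarrow> (\<exists>c. trans_ap S b (t n) (s n) c \<and> ap_walk S s n c t a)"
proof
  assume "ap_walk S s (Suc n) b t a"
  then obtain c where "c (Suc n) = b" "c 0 = a"
      "\<forall>k<Suc n. trans_ap S (c (Suc k)) (t k) (s k) (c k)"
    unfolding ap_walk_def by blast
  then show "\<exists>c. trans_ap S b (t n) (s n) c \<and> ap_walk S s n c t a"
    unfolding ap_walk_def by (intro exI[of _ "c n"]) auto
next
  assume "\<exists>c. trans_ap S b (t n) (s n) c \<and> ap_walk S s n c t a"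
  then obtain c where "trans_ap S b (t n) (s n) (c n)" "c 0 = a"
      "\<forall>k<n. trans_ap S (c (Suc k)) (t k) (s k) (c k)"
    unfolding ap_walk_def by blast
  then show "ap_walk S s (Suc n) b t a"
    unfolding ap_walk_def by (intro exI[of _ "c(Suc n := b)"]) (auto simp: less_Suc_eq)
qed

lemma ap_walk_cong:
  "(\<And>k. k < n \<Longrightarrow> t k = t' k) \<Longrightarrow> ap_walk S s n b t a \<longleftrightarrow> ap_walk S s n b t' a"
  unfolding ap_walk_def by auto

lemma ap_walk_if_occurrence:
  assumes "\<And>k. s k \<in> S"
  shows "subst_prefix s n [b] = p @ a # q \<Longrightarrow>
    \<exists>t. ap_walk S s n b t a \<and> ab p = (\<Sum>k<n. mat_prefix s k *v t k)"
proof (induction n arbitrary: b p q)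
  case 0
  then show ?case by (auto simp: ap_walk_0 Cons_eq_append_conv)
next
  case (Suc n)
  have "concat (map (\<lambda>c. subst_prefix s n [c]) (s n b)) = p @ a # q"
    using Suc.prems subst_prefix_eq_concat[of s n "s n b"] by simp
  then obtain w\<^sub>1 c w\<^sub>2 p' q' where
    split: "s n b = w\<^sub>1 @ c # w\<^sub>2" and c: "subst_prefix s n [c] = p' @ a # q'"
    and p: "p = subst_prefix s n w\<^sub>1 @ p'"
    by (metis concat_map_eq_append_Cons subst_prefix_eq_concat)
  obtain t where t: "ap_walk S s n c t a" "ab p' = (\<Sum>k<n. mat_prefix s k *v t k)"
    using Suc.IH[OF c] by blast
  define t' where "t' = t(n := ab w\<^sub>1)"
  have "trans_ap S b (t' n) (s n) c"
    using assms split unfolding trans_ap_def t'_def by auto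
  moreover have "ap_walk S s n c t' a"
    using t(1) ap_walk_cong[of n t t'] unfolding t'_def by simp
  moreover have "(\<Sum>k<n. mat_prefix s k *v t' k) = (\<Sum>k<n. mat_prefix s k *v t k)"
    unfolding t'_def by (intro sum.cong) auto
  then have "ab p = (\<Sum>k<Suc n. mat_prefix s k *v t' k)"
    using t(2) by (simp add: p t'_def ab_append ab_subst_prefix add.commute)
  ultimately show ?case
    using ap_walk_Suc by blast
qed

lemma occurrence_if_ap_walk:
  "ap_walk S s n b t a \<Longrightarrow>
    \<exists>p q. subst_prefix s n [b] = p @ a # q \<and> ab p = (\<Sum>k<n. mat_prefix s k *v t k)"
proof (induction n arbitrary: b)
  case 0
  then have "subst_prefix s 0 [b] = [] @ a # [] \<and> ab [] = (\<Sum>k<0. mat_prefix s k *v t k)"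
    by (simp add: ap_walk_0)
  then show ?case by blast
next
  case (Suc n)
  then obtain c where "trans_ap S b (t n) (s n) c" "ap_walk S s n c t a"
    using ap_walk_Suc by metis
  then obtain p\<^sub>1 q\<^sub>1 p q where b: "s n b = p\<^sub>1 @ c # q\<^sub>1" "ab p\<^sub>1 = t n"
    and c: "subst_prefix s n [c] = p @ a # q" "ab p = (\<Sum>k<n. mat_prefix s k *v t k)"
    using Suc.IH unfolding trans_ap_def by blast
  have "subst_prefix s (Suc n) [b] = (subst_prefix s n p\<^sub>1 @ p) @ a # (q @ subst_prefix s n q\<^sub>1)"
    using b(1) c(1) subst_prefix_append[of s n "[c]" q\<^sub>1] by (simp add: subst_prefix_append)
  moreover have "ab (subst_prefix s n p\<^sub>1 @ p) = (\<Sum>k<Suc n. mat_prefix s k *v t k)"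
    using b(2) c(2) by (simp add: ab_append ab_subst_prefix add.commute)
  ultimately show ?case by blast
qed

lemma occurrences_eq_ap_walk_sums:
  assumes "\<And>k. s k \<in> S"
  shows "{ab p | p q. subst_prefix s n [b] = p @ a # q} =
    {\<Sum>k<n. mat_prefix s k *v t k | t. ap_walk S s n b t a}"
proof (intro equalityI subsetI)
  fix v assume "v \<in> {ab p | p q. subst_prefix s n [b] = p @ a # q}"
  then show "v \<in> {\<Sum>k<n. mat_prefix s k *v t k | t. ap_walk S s n b t a}"
    using ap_walk_if_occurrence[of s S, OF assms] by blast
next
  fix v assume "v \<in> {\<Sum>k<n. mat_prefix s k *v t k | t. ap_walk S s n b t a}"
  then obtain t where "v = (\<Sum>k<n. mat_prefix s k *v t k)" "ap_walk S s n b t a"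
    by blast
  then obtain p q where "subst_prefix s n [b] = p @ a # q" "v = ab p"
    using occurrence_if_ap_walk[of S s n b t a] by auto
  then show "v \<in> {ab p | p q. subst_prefix s n [b] = p @ a # q}"
    by blast
qed

theorem lemma3p22:
  fixes S :: "'a::finite subst set"
    and s :: "nat \<Rightarrow> 'a subst"
    and u :: "nat \<Rightarrow> nat \<Rightarrow> 'a"
    and a :: 'a
  assumes "finite S"
    and "\<forall>\<sigma>\<in>S. is_subst \<sigma> \<and> unimodular \<sigma>"
    and "\<forall>k. s k \<in> S"
    and "is_fixed_point s u"
    and "filterlim (\<lambda>n. length (subst_prefix s n [u n 0])) at_top sequentially"
  shows "W a (u 0) = (\<Union>n. {\<Sum>k\<le>n. mat_prefix s k *v t k | t. is_path S n (u (Suc n) 0) t s a})"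
proof -
  have "prefix_inf (subst_prefix s n [u n 0]) (u 0)" for n
    using assms(2-4) by (intro prefix_inf_subst_prefix) (auto simp: prefix_inf_def)
  moreover have "filterlim (\<lambda>n. length (subst_prefix s (Suc n) [u (Suc n) 0])) at_top sequentially"
    using assms(5) filterlim_sequentially_Suc[of "\<lambda>n. length (subst_prefix s n [u n 0])"] by blast
  ultimately have "W a (u 0) = (\<Union>n. {ab p | p q. subst_prefix s (Suc n) [u (Suc n) 0] = p @ a # q})"
    by (intro W_eq_Union_occurrences)
  also have "\<dots> = (\<Union>n. {\<Sum>k\<le>n. mat_prefix s k *v t k | t. is_path S n (u (Suc n) 0) t s a})"
    using assms(3) occurrences_eq_ap_walk_sums[of s S]
    by (simp del: subst_prefix.simps add: is_path_iff_ap_walk lessThan_Suc_atMost)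
  finally show ?thesis .
qed

end
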